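(* If $Z_1,\dots,Z_S$ are i.i.d. $\mathcal N(0,1)$ random variables, then for every $\varepsilon\in(0,1)$, $$\mathrm P\left[\left|\frac1S\sum_{s=1}^S Z_s^2-1-\left(\frac1S\sum_{s=1}^S Z_s\right)^2\right|\ge\varepsilon\right]\le 3\exp\left\{\frac{-S\varepsilon^2}{25}\right\}.$$ *)

theory Defs
  imports "HOL-Probability.Probability"
begin

end

theory Submission
  imports Defs
begin

text \<open>Write \<open>A\<close> for the mean of the \<open>Z\<^sub>s\<^sup>2\<close> and \<open>B\<close> for the mean of the \<open>Z\<^sub>s\<close>.
  If \<open>\<bar>A - 1 - B\<^sup>2\<bar> \<ge> \<epsilon>\<close>, then \<open>A \<ge> 1 + \<epsilon>\<close>, \<open>A \<le> 1 - 3\<epsilon>/4\<close> or \<open>\<bar>B\<bar> \<ge> \<epsilon>/2\<close>.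
  Chernoff's inequality with the Gaussian moment generating functions
  \<open>E exp (t Z) = exp (t\<^sup>2/2)\<close> and \<open>E exp (c Z\<^sup>2) = 1 / sqrt (1 - 2c)\<close> bounds these events by
  \<open>exp (-S\<epsilon>\<^sup>2/18)\<close>, \<open>exp (-9S\<epsilon>\<^sup>2/128)\<close> and twice \<open>exp (-S\<epsilon>\<^sup>2/8)\<close>. For \<open>S\<epsilon>\<^sup>2 > 25\<close> their
  sum is at most \<open>3 exp (-S\<epsilon>\<^sup>2/25)\<close>; for \<open>S\<epsilon>\<^sup>2 \<le> 25\<close> the claimed bound exceeds 1.\<close>

lemma std_normal_density_mult_exp_linear:
  "std_normal_density x * exp (l * x) = exp (l\<^sup>2 / 2) * normal_density l 1 x"
proof -
  have "- x\<^sup>2 / 2 + l * x = l\<^sup>2 / 2 + - (x - l)\<^sup>2 / 2"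
    by (simp add: power2_eq_square field_simps)
  then show ?thesis
    by (simp add: std_normal_density_def normal_density_def mult_exp_exp)
qed

lemma std_normal_density_mult_exp_square:
  fixes c :: real
  assumes "c < 1/2"
  shows "std_normal_density x * exp (c * x\<^sup>2) =
    1 / sqrt (1 - 2 * c) * normal_density 0 (1 / sqrt (1 - 2 * c)) x"
proof -
  define q where "q = sqrt (1 - 2 * c)"
  have q: "q > 0" "q\<^sup>2 = 1 - 2 * c"
    using assms by (auto simp: q_def)
  have "- x\<^sup>2 / 2 + c * x\<^sup>2 = - x\<^sup>2 / (2 * (1 / q)\<^sup>2)"
    using q(1) by (simp add: power_divide field_simps q(2) algebra_simps)
  moreover have "sqrt (2 * pi * (1 / q)\<^sup>2) = sqrt (2 * pi) / q"
    using q(1) by (simp add: real_sqrt_mult power_divide real_sqrt_divide)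
  ultimately show ?thesis
    using q(1) unfolding q_def[symmetric]
    by (simp add: std_normal_density_def normal_density_def mult_exp_exp)
qed

lemma nn_integral_exp_std_normal:
  assumes "distributed M lborel X std_normal_density"
    and [measurable]: "g \<in> borel_measurable borel"
    and "\<And>x. std_normal_density x * exp (g x) = k * normal_density \<mu> \<sigma> x"
    and "0 \<le> k" and "0 < \<sigma>"
  shows "(\<integral>\<^sup>+\<omega>. ennreal (exp (g (X \<omega>))) \<partial>M) = ennreal k"
proof -
  have "(\<integral>\<^sup>+\<omega>. ennreal (exp (g (X \<omega>))) \<partial>M) =
      (\<integral>\<^sup>+x. ennreal (std_normal_density x) * ennreal (exp (g x)) \<partial>lborel)"
    by (rule distributed_nn_integral[symmetric, OF assms(1)]) simp
  also have "\<dots> = (\<integral>\<^sup>+x. ennreal k * ennreal (normal_density \<mu> \<sigma> x) \<partial>lborel)"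
    using assms(3,4) by (simp flip: ennreal_mult)
  also have "\<dots> = ennreal k"
    using assms(5) by (simp add: nn_integral_cmult nn_integral_eq_integral)
  finally show ?thesis .
qed

lemma std_normal_mgf:
  assumes "distributed M lborel X std_normal_density"
  shows "(\<integral>\<^sup>+\<omega>. ennreal (exp (l * X \<omega>)) \<partial>M) = ennreal (exp (l\<^sup>2 / 2))"
  by (rule nn_integral_exp_std_normal[OF assms _ std_normal_density_mult_exp_linear]) auto

lemma std_normal_square_mgf:
  assumes "distributed M lborel X std_normal_density" and "c < 1/2"
  shows "(\<integral>\<^sup>+\<omega>. ennreal (exp (c * (X \<omega>)\<^sup>2)) \<partial>M) = ennreal (1 / sqrt (1 - 2 * c))"
  using assms
  by (intro nn_integral_exp_std_normal[OF assms(1) _ std_normal_density_mult_exp_square]) auto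

lemma (in prob_space) Chernoff_ineq_indep_sum:
  fixes Y :: "'i \<Rightarrow> 'a \<Rightarrow> real"
  assumes fin: "finite I" and indep: "indep_vars (\<lambda>_. borel) Y I" and l: "l > 0"
    and mgf: "\<And>i. i \<in> I \<Longrightarrow> (\<integral>\<^sup>+x. ennreal (exp (l * Y i x)) \<partial>M) \<le> ennreal (exp k)"
  shows "prob {x\<in>space M. a \<le> (\<Sum>i\<in>I. Y i x)} \<le> exp (real (card I) * k - l * a)"
proof -
  have [measurable]: "random_variable borel (Y i)" if "i \<in> I" for i
    using that indep unfolding indep_vars_def by blast
  have "ennreal (prob {x\<in>space M. a \<le> (\<Sum>i\<in>I. Y i x)}) =
      emeasure M {x\<in>space M. a \<le> (\<Sum>i\<in>I. Y i x)}"
    by (simp add: emeasure_eq_measure)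
  also have "\<dots> \<le> ennreal (exp (-l * a)) * (\<integral>\<^sup>+x\<in>space M. exp (l * (\<Sum>i\<in>I. Y i x)) \<partial>M)"
    by (intro Chernoff_ineq_nn_integral_ge l) auto
  also have "(\<integral>\<^sup>+x\<in>space M. exp (l * (\<Sum>i\<in>I. Y i x)) \<partial>M) =
      (\<integral>\<^sup>+x. (\<Prod>i\<in>I. ennreal (exp (l * Y i x))) \<partial>M)"
    by (intro nn_integral_cong) (simp_all add: sum_distrib_left exp_sum fin prod_ennreal)
  also have "\<dots> = (\<Prod>i\<in>I. \<integral>\<^sup>+x. ennreal (exp (l * Y i x)) \<partial>M)"
    by (intro indep_vars_nn_integral fin indep_vars_compose2[OF indep]) auto
  also have "ennreal (exp (-l * a)) * \<dots> \<le> ennreal (exp (-l * a)) * (\<Prod>i\<in>I. ennreal (exp k))"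
    by (intro mult_left_mono prod_mono_ennreal mgf) auto
  also have "\<dots> = ennreal (exp (-l * a) * exp k ^ card I)"
    by (simp add: ennreal_mult ennreal_power)
  also have "exp (-l * a) * exp k ^ card I = exp (real (card I) * k - l * a)"
    by (simp add: exp_diff exp_minus divide_inverse ac_simps flip: exp_of_nat_mult)
  finally show ?thesis
    by (subst (asm) ennreal_le_iff) auto
qed

lemma one_div_sqrt_le_exp:
  fixes y a :: real
  assumes "0 < y" and "- 2 * a \<le> ln y"
  shows "1 / sqrt y \<le> exp a"
proof -
  have "exp (- a) ^ 2 \<le> y"
    using assms by (simp add: ln_ge_iff flip: exp_of_nat_mult)
  then have "exp (- a) \<le> sqrt y"
    by (rule real_le_rsqrt)
  then have "1 / sqrt y \<le> 1 / exp (- a)"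
    using assms(1) by (intro divide_left_mono) auto
  then show ?thesis
    by (simp add: exp_minus divide_inverse)
qed

lemma variance_deviation_cases:
  fixes a b \<epsilon> :: real
  assumes "0 < \<epsilon>" and "\<epsilon> < 1" and "\<epsilon> \<le> \<bar>a - 1 - b\<^sup>2\<bar>"
  shows "1 + \<epsilon> \<le> a \<or> a \<le> 1 - 3/4 * \<epsilon> \<or> \<epsilon>/2 \<le> b \<or> b \<le> - (\<epsilon>/2)"
proof (rule ccontr)
  assume "\<not> ?thesis"
  then have a: "1 - 3/4 * \<epsilon> < a" "a < 1 + \<epsilon>" and b: "\<bar>b\<bar> < \<epsilon>/2"
    by auto
  have "b\<^sup>2 \<le> (\<epsilon>/2)\<^sup>2"
    using b assms(1) by (simp add: power2_le_iff_abs_le)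
  also have "\<dots> < \<epsilon>/4"
    using assms(1,2) by (simp add: power2_eq_square)
  finally show False
    using a assms(3) zero_le_power2[of b] by arith
qed

locale indep_std_normal_vars = prob_space +
  fixes X :: "'i \<Rightarrow> 'a \<Rightarrow> real" and I :: "'i set"
  assumes finite_index: "finite I"
    and indep: "indep_vars (\<lambda>_. borel) X I"
    and std_normal: "\<And>i. i \<in> I \<Longrightarrow> distributed M lborel (X i) std_normal_density"
begin

lemma indep_vars_comp:
  "f \<in> borel_measurable borel \<Longrightarrow> indep_vars (\<lambda>_. borel) (\<lambda>i x. f (X i x)) I"
  using indep_vars_compose2[OF indep, of "\<lambda>_. f"] by simp

lemma borel_measurable_sum_comp:
  fixes f :: "real \<Rightarrow> real"
  assumes [measurable]: "f \<in> borel_measurable borel"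
  shows "(\<lambda>x. \<Sum>i\<in>I. f (X i x)) \<in> borel_measurable M"
proof -
  have "X i \<in> borel_measurable M" if "i \<in> I" for i
    using that indep unfolding indep_vars_def by blast
  then show ?thesis
    by (intro borel_measurable_sum measurable_compose[OF _ assms])
qed

lemma sum_upper_tail:
  assumes "0 < t"
  shows "prob {x\<in>space M. real (card I) * t \<le> (\<Sum>i\<in>I. X i x)} \<le> exp (- real (card I) * t\<^sup>2 / 2)"
proof -
  have mgf: "(\<integral>\<^sup>+x. ennreal (exp (t * X i x)) \<partial>M) \<le> ennreal (exp (t\<^sup>2 / 2))" if "i \<in> I" for i
    using std_normal_mgf[OF std_normal[OF that]] by simp
  have "prob {x\<in>space M. real (card I) * t \<le> (\<Sum>i\<in>I. X i x)} \<le>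
      exp (real (card I) * (t\<^sup>2 / 2) - t * (real (card I) * t))"
    by (rule Chernoff_ineq_indep_sum[OF finite_index indep assms mgf])
  also have "\<dots> = exp (- real (card I) * t\<^sup>2 / 2)"
    by (simp add: power2_eq_square field_simps)
  finally show ?thesis .
qed

lemma sum_lower_tail:
  assumes "0 < t"
  shows "prob {x\<in>space M. (\<Sum>i\<in>I. X i x) \<le> - (real (card I) * t)} \<le> exp (- real (card I) * t\<^sup>2 / 2)"
proof -
  have mgf: "(\<integral>\<^sup>+x. ennreal (exp (t * - X i x)) \<partial>M) \<le> ennreal (exp (t\<^sup>2 / 2))" if "i \<in> I" for i
    using std_normal_mgf[OF std_normal[OF that], of "- t"] by simp
  have "prob {x\<in>space M. (\<Sum>i\<in>I. X i x) \<le> - (real (card I) * t)} =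
      prob {x\<in>space M. real (card I) * t \<le> (\<Sum>i\<in>I. - X i x)}"
    by (simp add: sum_negf le_minus_iff)
  also have "\<dots> \<le> exp (real (card I) * (t\<^sup>2 / 2) - t * (real (card I) * t))"
    by (rule Chernoff_ineq_indep_sum[OF finite_index indep_vars_comp assms mgf]) simp
  also have "\<dots> = exp (- real (card I) * t\<^sup>2 / 2)"
    by (simp add: power2_eq_square field_simps)
  finally show ?thesis .
qed

lemma sum_squares_upper_tail:
  assumes "0 < \<delta>" and "\<delta> \<le> 3/2"
  shows "prob {x\<in>space M. real (card I) * (1 + \<delta>) \<le> (\<Sum>i\<in>I. (X i x)\<^sup>2)}
    \<le> exp (- real (card I) * \<delta>\<^sup>2 / 18)"
proof -
  have "- (\<delta>/3) - 2 * (\<delta>/3)\<^sup>2 \<le> ln (1 - \<delta>/3)"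
    using assms by (intro ln_one_minus_pos_lower_bound) auto
  then have "1 / sqrt (1 - 2 * (\<delta>/6)) \<le> exp (\<delta>/6 + \<delta>\<^sup>2/9)"
    using assms by (intro one_div_sqrt_le_exp) (auto simp: power2_eq_square)
  then have mgf: "(\<integral>\<^sup>+x. ennreal (exp (\<delta>/6 * (X i x)\<^sup>2)) \<partial>M) \<le> ennreal (exp (\<delta>/6 + \<delta>\<^sup>2/9))"
    if "i \<in> I" for i
    using std_normal_square_mgf[OF std_normal[OF that], of "\<delta>/6"] assms by simp
  have "prob {x\<in>space M. real (card I) * (1 + \<delta>) \<le> (\<Sum>i\<in>I. (X i x)\<^sup>2)} \<le>
      exp (real (card I) * (\<delta>/6 + \<delta>\<^sup>2/9) - \<delta>/6 * (real (card I) * (1 + \<delta>)))"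
    by (rule Chernoff_ineq_indep_sum[OF finite_index indep_vars_comp _ mgf]) (use assms in simp_all)
  also have "\<dots> = exp (- real (card I) * \<delta>\<^sup>2 / 18)"
    by (simp add: power2_eq_square field_simps)
  finally show ?thesis .
qed

lemma sum_squares_lower_tail:
  assumes "0 < \<delta>" and "\<delta> \<le> 2"
  shows "prob {x\<in>space M. (\<Sum>i\<in>I. (X i x)\<^sup>2) \<le> real (card I) * (1 - \<delta>)}
    \<le> exp (- real (card I) * \<delta>\<^sup>2 / 8)"
proof -
  have "\<delta>/2 - (\<delta>/2)\<^sup>2 \<le> ln (1 + \<delta>/2)"
    using assms by (intro ln_one_plus_pos_lower_bound) auto
  then have "1 / sqrt (1 - 2 * - (\<delta>/4)) \<le> exp (\<delta>\<^sup>2/8 - \<delta>/4)"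
    using assms by (intro one_div_sqrt_le_exp) (auto simp: power2_eq_square)
  then have mgf: "(\<integral>\<^sup>+x. ennreal (exp (\<delta>/4 * - (X i x)\<^sup>2)) \<partial>M) \<le> ennreal (exp (\<delta>\<^sup>2/8 - \<delta>/4))"
    if "i \<in> I" for i
    using std_normal_square_mgf[OF std_normal[OF that], of "- (\<delta>/4)"] assms by simp
  have "prob {x\<in>space M. (\<Sum>i\<in>I. (X i x)\<^sup>2) \<le> real (card I) * (1 - \<delta>)} =
      prob {x\<in>space M. - (real (card I) * (1 - \<delta>)) \<le> (\<Sum>i\<in>I. - (X i x)\<^sup>2)}"
    by (simp add: sum_negf)
  also have "\<dots> \<le> exp (real (card I) * (\<delta>\<^sup>2/8 - \<delta>/4) - \<delta>/4 * - (real (card I) * (1 - \<delta>)))"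
    by (rule Chernoff_ineq_indep_sum[OF finite_index indep_vars_comp _ mgf]) (use assms in simp_all)
  also have "\<dots> = exp (- real (card I) * \<delta>\<^sup>2 / 8)"
    by (simp add: power2_eq_square field_simps)
  finally show ?thesis .
qed

lemma prob_sample_variance_deviation_le:
  assumes "0 < \<epsilon>" and "\<epsilon> < 1" and "I \<noteq> {}"
  shows "prob {x\<in>space M.
      \<bar>(1 / real (card I)) * (\<Sum>i\<in>I. (X i x)\<^sup>2) - 1 - ((1 / real (card I)) * (\<Sum>i\<in>I. X i x))\<^sup>2\<bar> \<ge> \<epsilon>}
    \<le> exp (- real (card I) * \<epsilon>\<^sup>2 / 18) + exp (- real (card I) * (3/4 * \<epsilon>)\<^sup>2 / 8)
      + 2 * exp (- real (card I) * (\<epsilon>/2)\<^sup>2 / 2)"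
proof -
  define n where "n = real (card I)"
  have n: "0 < n"
    using assms(3) finite_index by (simp add: n_def card_gt_0_iff)
  define Sq where "Sq x = (\<Sum>i\<in>I. (X i x)\<^sup>2)" for x
  define Sm where "Sm x = (\<Sum>i\<in>I. X i x)" for x
  define E1 where "E1 = {x\<in>space M. n * (1 + \<epsilon>) \<le> Sq x}"
  define E2 where "E2 = {x\<in>space M. Sq x \<le> n * (1 - 3/4 * \<epsilon>)}"
  define E3 where "E3 = {x\<in>space M. n * (\<epsilon>/2) \<le> Sm x}"
  define E4 where "E4 = {x\<in>space M. Sm x \<le> - (n * (\<epsilon>/2))}"
  have [measurable]: "Sq \<in> borel_measurable M" "Sm \<in> borel_measurable M"
    using borel_measurable_sum_comp[of "\<lambda>y. y\<^sup>2"] borel_measurable_sum_comp[of "\<lambda>y. y"]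
    by (simp_all add: Sq_def[abs_def] Sm_def[abs_def])
  have events: "E1 \<in> events" "E2 \<in> events" "E3 \<in> events" "E4 \<in> events"
    unfolding E1_def E2_def E3_def E4_def by measurable
  have "{x\<in>space M. \<epsilon> \<le> \<bar>Sq x / n - 1 - (Sm x / n)\<^sup>2\<bar>} \<subseteq> E1 \<union> E2 \<union> E3 \<union> E4"
  proof
    fix x assume "x \<in> {x\<in>space M. \<epsilon> \<le> \<bar>Sq x / n - 1 - (Sm x / n)\<^sup>2\<bar>}"
    then have x: "x \<in> space M" and "\<epsilon> \<le> \<bar>Sq x / n - 1 - (Sm x / n)\<^sup>2\<bar>"
      by simp_all
    then have "1 + \<epsilon> \<le> Sq x / n \<or> Sq x / n \<le> 1 - 3/4 * \<epsilon> \<or> \<epsilon>/2 \<le> Sm x / n \<or> Sm x / n \<le> - (\<epsilon>/2)"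
      by (intro variance_deviation_cases assms(1,2))
    then show "x \<in> E1 \<union> E2 \<union> E3 \<union> E4"
      using x n by (auto simp: E1_def E2_def E3_def E4_def pos_le_divide_eq pos_divide_le_eq mult.commute)
  qed
  then have "prob {x\<in>space M. \<epsilon> \<le> \<bar>Sq x / n - 1 - (Sm x / n)\<^sup>2\<bar>} \<le> prob (E1 \<union> E2 \<union> E3 \<union> E4)"
    using events by (intro finite_measure_mono) auto
  also have "\<dots> \<le> prob E1 + prob E2 + prob E3 + prob E4"
    using measure_Un_le[OF sets.Un[OF sets.Un[OF events(1,2)] events(3)] events(4)]
      measure_Un_le[OF sets.Un[OF events(1,2)] events(3)] measure_Un_le[OF events(1,2)]
    by linarith
  also have "\<dots> \<le> exp (- n * \<epsilon>\<^sup>2 / 18) + exp (- n * (3/4 * \<epsilon>)\<^sup>2 / 8)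
      + exp (- n * (\<epsilon>/2)\<^sup>2 / 2) + exp (- n * (\<epsilon>/2)\<^sup>2 / 2)"
    using sum_squares_upper_tail[of \<epsilon>] sum_squares_lower_tail[of "3/4 * \<epsilon>"]
      sum_upper_tail[of "\<epsilon>/2"] sum_lower_tail[of "\<epsilon>/2"] assms(1,2)
    unfolding E1_def E2_def E3_def E4_def Sq_def Sm_def n_def
    by (intro add_mono) simp_all
  finally show ?thesis
    by (simp add: Sq_def Sm_def n_def)
qed

end

lemma one_le_three_exp:
  fixes u :: real
  assumes "u \<le> 25"
  shows "1 \<le> 3 * exp (- u / 25)"
proof -
  have "exp 1 \<le> (3::real)"
    using exp_le by simp
  then have "1 \<le> 3 * exp (-1::real)"
    by (simp add: exp_minus field_simps)
  also have "\<dots> \<le> 3 * exp (- u / 25)"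
    using assms by simp
  finally show ?thesis .
qed

lemma exp_tails_le_three_exp:
  fixes u :: real
  assumes "25 < u"
  shows "exp (- u / 18) + exp (- 9 * u / 128) + 2 * exp (- u / 8) \<le> 3 * exp (- u / 25)"
proof -
  have "exp (- u / 18) \<le> exp (- u / 25)" and "exp (- 9 * u / 128) \<le> exp (- u / 25)"
    using assms by simp_all
  moreover have "2 * exp (- u / 8) \<le> exp (- u / 25)"
  proof -
    have "1 + 2 \<le> exp (2::real)"
      by (rule exp_ge_add_one_self_aux) simp
    then have "2 * exp (-2::real) \<le> 1"
      by (simp add: exp_minus field_simps)
    moreover have "exp (- 17 * u / 200) \<le> exp (-2)"
      using assms by simp
    ultimately have "2 * exp (- 17 * u / 200) \<le> 1"
      by linarith
    moreover have "exp (- u / 8) = exp (- u / 25) * exp (- 17 * u / 200)"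
      by (simp add: mult_exp_exp)
    ultimately show ?thesis
      by (simp add: mult_left_le)
  qed
  ultimately show ?thesis
    by linarith
qed

theorem lemma6:
  fixes M :: "'a measure" and Z :: "nat \<Rightarrow> 'a \<Rightarrow> real" and S :: nat and \<epsilon> :: real
  assumes "prob_space M"
    and "prob_space.indep_vars M (\<lambda>_. borel) Z {1..S}"
    and "\<And>s. s \<in> {1..S} \<Longrightarrow> distributed M lborel (Z s) std_normal_density"
    and "0 < \<epsilon>" and "\<epsilon> < 1"
  shows "measure M {\<omega> \<in> space M.
           \<bar>(1 / real S) * (\<Sum>s=1..S. (Z s \<omega>)\<^sup>2) - 1 - ((1 / real S) * (\<Sum>s=1..S. Z s \<omega>))\<^sup>2\<bar> \<ge> \<epsilon>}
         \<le> 3 * exp (- real S * \<epsilon>\<^sup>2 / 25)"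
proof -
  interpret prob_space M
    by fact
  interpret indep_std_normal_vars M Z "{1..S}"
    using assms(2,3) by unfold_locales simp_all
  define u where "u = real S * \<epsilon>\<^sup>2"
  have rhs: "- real S * \<epsilon>\<^sup>2 / 25 = - u / 25"
    by (simp add: u_def)
  show ?thesis
  proof (cases "u \<le> 25")
    case True
    then show ?thesis
      unfolding rhs using one_le_three_exp prob_le_1 order_trans by blast
  next
    case False
    then have "{1..S} \<noteq> {}"
      by (cases S) (auto simp: u_def)
    from prob_sample_variance_deviation_le[OF assms(4,5) this]
    have "prob {\<omega> \<in> space M.
        \<bar>(1 / real S) * (\<Sum>s=1..S. (Z s \<omega>)\<^sup>2) - 1 - ((1 / real S) * (\<Sum>s=1..S. Z s \<omega>))\<^sup>2\<bar> \<ge> \<epsilon>}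
      \<le> exp (- real S * \<epsilon>\<^sup>2 / 18) + exp (- real S * (3/4 * \<epsilon>)\<^sup>2 / 8)
        + 2 * exp (- real S * (\<epsilon>/2)\<^sup>2 / 2)"
      by simp
    also have "\<dots> = exp (- u / 18) + exp (- 9 * u / 128) + 2 * exp (- u / 8)"
      by (simp add: u_def power2_eq_square)
    also have "\<dots> \<le> 3 * exp (- u / 25)"
      using False exp_tails_le_three_exp by simp
    finally show ?thesis
      unfolding rhs .
  qed
qed

end
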